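(* Let $\mathcal{X}=\prod_{r=1}^d\mathcal{Z}_r$ be a product of nonempty convex compact subsets of Euclidean spaces, $F$ an $L$-Lipschitz operator on $\mathcal{X}$ with components $F_r$, $B_F:=\max_r\sup_x\|F_r(x)\|_2$, and suppose the average $(\alpha,\ell,h)$-generalized Minty property with slackness $\gamma>0$ holds. Then after $T\in\mathbb{N}$ iterations of rescaled optimistic gradient descent with learning rate $\eta\le\frac14\sqrt{\frac{\ell}{h^3L^2+hB_F^2\alpha^2d}}$ there is an iterate $x^{(t)}$, $t\in\{1,\dots,T\}$, such that for every $x^\star\in\mathcal{X}$, $$\langle x^{(t)}-x^\star,F(x^{(t)})\rangle\le 2d\Big(\frac{\max_r D_{\mathcal{Z}_r}}{\eta\ell}+\frac{hB_F}{\ell}\Big)\sqrt{\frac{4\eta\gamma}{\ell}+\frac{2D_{\mathcal{X}}^2h}{\ell T}}.$$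
   Context: $D_{\mathcal{Y}}$ is the $\ell_2$ diameter of $\mathcal{Y}$. $\mathbf{1}_{\mathcal{Z}_r}$ is the indicator vector of the coordinates of $\mathcal{Z}_r$; $\circ$ is the coordinatewise product; vector inequalities are coordinatewise. $A(x)=\sum_r a_r(x)\mathbf{1}_{\mathcal{Z}_r}$ with each $a_r$ $\alpha$-Lipschitz and $0<\ell\le A(x)\le h$; $W(x)=\sum_r w_r(x)\mathbf{1}_{\mathcal{Z}_r}$ with $0<\ell\le W(x)\le h$. The average $(\alpha,\ell,h)$-generalized Minty property with slackness $\gamma$: for every $T$ and sequence $(x^{(t)})_{t\le T}$ in $\mathcal{X}$ there is $x^\star\in\mathcal{X}$ with $\frac1T\sum_{t=1}^T\langle x^{(t)}-x^\star,F(x^{(t)})\circ A(x^{(t)})\circ W(x^\star)\rangle\ge-\gamma$. Rescaled optimistic gradient descent: from arbitrary $x^{(0)}=\hat x^{(1)}\in\mathcal{X}$, $x^{(t)}=\Pi_{\mathcal{X}}(\hat x^{(t)}-\eta A(x^{(t-1)})\circ F(x^{(t-1)}))$, $\hat x^{(t+1)}=\Pi_{\mathcal{X}}(\hat x^{(t)}-\eta A(x^{(t)})\circ F(x^{(t)}))$ for $t\ge1$. *)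

theory Defs
  imports "HOL-Analysis.Analysis"
begin

text \<open>Coordinates are partitioned into d blocks by
  blk :: 'n => nat (coordinate i belongs to block blk i). The r-th Euclidean
  space is the coordinate subspace of the coordinates i with blk i = r.\<close>

definition blkind :: "('n::finite \<Rightarrow> nat) \<Rightarrow> nat \<Rightarrow> real^'n" where
  "blkind blk r = (\<chi> i. if blk i = r then 1 else 0)"

definition blkcomp :: "('n::finite \<Rightarrow> nat) \<Rightarrow> nat \<Rightarrow> real^'n \<Rightarrow> real^'n" where
  "blkcomp blk r x = (\<chi> i. if blk i = r then x $ i else 0)"

definition prodset :: "('n::finite \<Rightarrow> nat) \<Rightarrow> nat \<Rightarrow> (nat \<Rightarrow> (real^'n) set) \<Rightarrow> (real^'n) set" where
  "prodset blk d Z = {x. \<forall>r<d. blkcomp blk r x \<in> Z r}"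

definition cmul :: "real^'n::finite \<Rightarrow> real^'n \<Rightarrow> real^'n" (infixl "\<circ>\<^sub>c" 70) where
  "u \<circ>\<^sub>c v = (\<chi> i. u $ i * v $ i)"

definition blkvec :: "('n::finite \<Rightarrow> nat) \<Rightarrow> nat \<Rightarrow> (nat \<Rightarrow> real) \<Rightarrow> real^'n" where
  "blkvec blk d c = (\<Sum>r<d. c r *\<^sub>R blkind blk r)"

definition BF :: "('n::finite \<Rightarrow> nat) \<Rightarrow> nat \<Rightarrow> (real^'n) set \<Rightarrow> (real^'n \<Rightarrow> real^'n) \<Rightarrow> real" where
  "BF blk d X F = (MAX r\<in>{..<d}. SUP x\<in>X. norm (blkcomp blk r (F x)))"

end

theory Submission
  imports Defs
begin

(* Fix the Minty point xs of the iterates and the weights w = W xs, which are constant on each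
   block. Since X is a product of the blocks Z_r, Euclidean projection onto X acts blockwise and is
   therefore also the projection onto X for the w-weighted norm. Hence the three-point inequality
   of optimistic gradient descent holds in that norm for the rescaled operator A o F, and the
   step-size condition absorbs its error term through the Lipschitz bound on A o F. Telescoping and
   the Minty inequality then bound the summed squared residuals
   |x_t - xh_t|^2 + |x_t - xh_(t+1)|^2 by (2 h D_X^2 + 4 eta gamma T) / l, so some iterate has a
   small residual. For that iterate the projection inequality defining xh_(t+1), read block by
   block and divided by a_r(x_t) >= l, bounds every block of the gap <x_t - z, F(x_t)>. *)

lemma norm_add_sq_le:
  fixes u v :: "'a::real_inner"
  shows "(norm (u + v))\<^sup>2 \<le> 2 * (norm u)\<^sup>2 + 2 * (norm v)\<^sup>2"
proof -
  have "0 \<le> (norm (u - v))\<^sup>2" by simp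
  then show ?thesis by (simp add: power2_norm_eq_inner inner_simps inner_commute)
qed

(* The hypotheses are the variational inequalities of xt = proj (xh - eta g') tested at xh' and
   of xh' = proj (xh - eta g) tested at xs and at xt. *)
lemma optimistic_projection_step:
  fixes xh xh' xt xs g g' :: "'a::real_inner"
  assumes proj_xt: "inner (xh - \<eta> *\<^sub>R g' - xt) (xh' - xt) \<le> 0"
    and proj_xh_xs: "inner (xh - \<eta> *\<^sub>R g - xh') (xs - xh') \<le> 0"
    and proj_xh_xt: "inner (xh - \<eta> *\<^sub>R g - xh') (xt - xh') \<le> 0"
  shows "\<eta> * inner g (xt - xs) \<le> (norm (xh - xs))\<^sup>2 / 2 - (norm (xh' - xs))\<^sup>2 / 2
           - (norm (xt - xh))\<^sup>2 / 2 - (norm (xt - xh'))\<^sup>2 / 2 + \<eta>\<^sup>2 * (norm (g - g'))\<^sup>2"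
proof -
  let ?c = "\<eta> * inner (g - g') (xt - xh')"
  have three_point: "\<eta> * inner g (xt - xs) = (norm (xh - xs))\<^sup>2 / 2 - (norm (xh' - xs))\<^sup>2 / 2
      - (norm (xt - xh))\<^sup>2 / 2 - (norm (xt - xh'))\<^sup>2 / 2 + ?c
      + inner (xh - \<eta> *\<^sub>R g' - xt) (xh' - xt) + inner (xh - \<eta> *\<^sub>R g - xh') (xs - xh')"
    by (simp add: power2_norm_eq_inner inner_simps inner_commute field_simps)
  have "(norm (xt - xh'))\<^sup>2 \<le> ?c"
  proof -
    have "inner (xh - \<eta> *\<^sub>R g' - xt) (xh' - xt) + inner (xh - \<eta> *\<^sub>R g - xh') (xt - xh')
        = (norm (xt - xh'))\<^sup>2 - ?c"
      by (simp add: power2_norm_eq_inner inner_simps inner_commute algebra_simps)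
    with proj_xt proj_xh_xt show ?thesis by linarith
  qed
  moreover have "?c \<le> \<eta>\<^sup>2 * (norm (g - g'))\<^sup>2 / 2 + (norm (xt - xh'))\<^sup>2 / 2"
  proof -
    have "?c \<le> norm (\<eta> *\<^sub>R (g - g')) * norm (xt - xh')"
      using norm_cauchy_schwarz[of "\<eta> *\<^sub>R (g - g')" "xt - xh'"] by simp
    also have "\<dots> \<le> (norm (\<eta> *\<^sub>R (g - g')))\<^sup>2 / 2 + (norm (xt - xh'))\<^sup>2 / 2"
      using sum_squares_bound[of "norm (\<eta> *\<^sub>R (g - g'))" "norm (xt - xh')"] by linarith
    finally show ?thesis by (simp add: power_mult_distrib)
  qed
  ultimately have "?c \<le> \<eta>\<^sup>2 * (norm (g - g'))\<^sup>2" by linarith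
  with three_point proj_xt proj_xh_xs show ?thesis by linarith
qed

lemma telescoping_residual_sum:
  fixes E \<phi> P Q :: "nat \<Rightarrow> real"
  assumes step: "\<And>t. 1 \<le> t \<Longrightarrow>
      E t \<le> \<phi> t / 2 - \<phi> (t + 1) / 2 - P t / 2 - Q t / 2 + (P t + Q (t - 1)) / 4"
    and Q_0: "Q 0 = 0" and \<phi>_nonneg: "\<And>t. 0 \<le> \<phi> t" and Q_nonneg: "\<And>t. 0 \<le> Q t"
  shows "(\<Sum>t=1..T. P t + Q t) \<le> 2 * \<phi> 1 - 4 * (\<Sum>t=1..T. E t)"
proof -
  have "(\<Sum>t=1..n. E t) \<le> \<phi> 1 / 2 - \<phi> (n + 1) / 2 - (\<Sum>t=1..n. P t + Q t) / 4 - Q n / 4" for n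
  proof (induction n)
    case 0
    then show ?case using Q_0 by simp
  next
    case (Suc n)
    have "E (Suc n) \<le> \<phi> (Suc n) / 2 - \<phi> (Suc n + 1) / 2 - P (Suc n) / 2 - Q (Suc n) / 2
        + (P (Suc n) + Q n) / 4"
      using step[of "Suc n"] by simp
    with Suc.IH show ?case by simp argo
  qed
  from this[of T] show ?thesis using \<phi>_nonneg[of "T + 1"] Q_nonneg[of T] by argo
qed

lemma add_le_two_sqrt_of_sq_add_le:
  fixes p q M :: real
  assumes "0 \<le> p" and "0 \<le> q" and "p\<^sup>2 + q\<^sup>2 \<le> M"
  shows "p + q \<le> 2 * sqrt M"
proof -
  have "0 \<le> M" using assms(3) zero_le_power2[of p] zero_le_power2[of q] by linarith
  have "(p + q)\<^sup>2 \<le> 2 * (p\<^sup>2 + q\<^sup>2)"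
    using sum_squares_bound[of p q] by (simp add: power2_sum)
  also have "\<dots> \<le> (2 * sqrt M)\<^sup>2"
    using assms(3) \<open>0 \<le> M\<close> by (simp add: power_mult_distrib)
  finally show ?thesis by (rule power2_le_imp_le) (simp add: \<open>0 \<le> M\<close>)
qed

lemma exists_le_of_sum_le:
  fixes f :: "nat \<Rightarrow> real"
  assumes "1 \<le> T" and "(\<Sum>t=1..T. f t) \<le> real T * K"
  shows "\<exists>t\<in>{1..T}. f t \<le> K"
proof (rule ccontr)
  assume "\<not> (\<exists>t\<in>{1..T}. f t \<le> K)"
  then have "(\<Sum>t=1..T. K) < (\<Sum>t=1..T. f t)"
    using assms(1) by (intro sum_strict_mono) (auto simp: not_le)
  with assms(2) show False by simp
qed

section \<open>Block decomposition\<close>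

lemma blkcomp_nth [simp]: "blkcomp blk r x $ i = (if blk i = r then x $ i else 0)"
  by (simp add: blkcomp_def)

lemma cmul_nth [simp]: "(u \<circ>\<^sub>c v) $ i = u $ i * v $ i"
  by (simp add: cmul_def)

lemma blkvec_nth:
  assumes "blk i < d"
  shows "blkvec blk d c $ i = c (blk i)"
  using assms unfolding blkvec_def blkind_def by (simp add: if_distrib sum.delta' cong: if_cong)

lemma blkcomp_diff [simp]: "blkcomp blk r (x - y) = blkcomp blk r x - blkcomp blk r y"
  by (simp add: vec_eq_iff)

lemma blkcomp_add [simp]: "blkcomp blk r (x + y) = blkcomp blk r x + blkcomp blk r y"
  by (simp add: vec_eq_iff)

lemma blkcomp_scaleR [simp]: "blkcomp blk r (a *\<^sub>R x) = a *\<^sub>R blkcomp blk r x"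
  by (simp add: vec_eq_iff)

lemma blkcomp_idem [simp]: "blkcomp blk r (blkcomp blk r x) = blkcomp blk r x"
  by (simp add: vec_eq_iff)

lemma blkcomp_blkvec_cmul:
  assumes "\<forall>i. blk i < d"
  shows "blkcomp blk r (blkvec blk d c \<circ>\<^sub>c u) = c r *\<^sub>R blkcomp blk r u"
  using assms by (auto simp: vec_eq_iff blkvec_nth)

lemma inner_blkcomp_commute: "inner (blkcomp blk r u) v = inner u (blkcomp blk r v)"
  unfolding inner_vec_def by (rule sum.cong) auto

lemma sum_blkcomp:
  assumes "\<forall>i. blk i < d"
  shows "(\<Sum>r<d. blkcomp blk r x) = x"
  using assms by (simp add: vec_eq_iff sum.delta')

lemma norm_sq_vec: "(norm v)\<^sup>2 = (\<Sum>i\<in>UNIV. (v $ i)\<^sup>2)"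
  unfolding power2_norm_eq_inner inner_vec_def by (simp add: power2_eq_square)

lemma norm_blkcomp_le: "norm (blkcomp blk r v) \<le> norm v"
proof -
  have "(norm (blkcomp blk r v))\<^sup>2 \<le> (norm v)\<^sup>2"
    unfolding norm_sq_vec by (rule sum_mono) simp
  then show ?thesis by (simp add: power2_le_iff_abs_le)
qed

lemma norm_sq_sum_blkcomp:
  assumes "\<forall>i. blk i < d"
  shows "(norm v)\<^sup>2 = (\<Sum>r<d. (norm (blkcomp blk r v))\<^sup>2)"
proof -
  have "(norm v)\<^sup>2 = inner v (\<Sum>r<d. blkcomp blk r v)"
    by (simp add: sum_blkcomp[OF assms] power2_norm_eq_inner)
  also have "\<dots> = (\<Sum>r<d. inner v (blkcomp blk r v))"
    by (rule inner_sum_right)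
  also have "\<dots> = (\<Sum>r<d. (norm (blkcomp blk r v))\<^sup>2)"
    by (simp add: power2_norm_eq_inner inner_blkcomp_commute)
  finally show ?thesis .
qed

lemma norm_blkvec_cmul_sq:
  assumes "\<forall>i. blk i < d"
  shows "(norm (blkvec blk d c \<circ>\<^sub>c u))\<^sup>2 = (\<Sum>r<d. (c r)\<^sup>2 * (norm (blkcomp blk r u))\<^sup>2)"
  by (simp add: norm_sq_sum_blkcomp[OF assms, of "blkvec blk d c \<circ>\<^sub>c u"]
      blkcomp_blkvec_cmul[OF assms] power_mult_distrib)

lemma norm_cmul_le:
  assumes "\<forall>i. \<bar>s $ i\<bar> \<le> h"
  shows "norm (s \<circ>\<^sub>c u) \<le> h * norm u"
proof -
  have "0 \<le> h" using assms abs_ge_zero order_trans by blast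
  have "(norm (s \<circ>\<^sub>c u))\<^sup>2 \<le> (\<Sum>i\<in>UNIV. h\<^sup>2 * (u $ i)\<^sup>2)"
    unfolding norm_sq_vec
  proof (rule sum_mono)
    fix i
    have "(s $ i)\<^sup>2 \<le> h\<^sup>2" using assms by (metis abs_ge_zero power2_abs power_mono)
    then show "((s \<circ>\<^sub>c u) $ i)\<^sup>2 \<le> h\<^sup>2 * (u $ i)\<^sup>2"
      by (simp add: power_mult_distrib mult_right_mono)
  qed
  also have "\<dots> = (h * norm u)\<^sup>2"
    by (simp add: norm_sq_vec power_mult_distrib sum_distrib_left)
  finally show ?thesis using \<open>0 \<le> h\<close> by (simp add: power2_le_iff_abs_le)
qed

section \<open>Weighted norms\<close>

(* norm (wscale w v) is the w-weighted Euclidean norm of v. *)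
definition wscale :: "real^'n::finite \<Rightarrow> real^'n \<Rightarrow> real^'n" where
  "wscale \<omega> v = (\<chi> i. sqrt (\<omega> $ i) * v $ i)"

lemma wscale_diff [simp]: "wscale \<omega> (u - v) = wscale \<omega> u - wscale \<omega> v"
  by (simp add: wscale_def vec_eq_iff algebra_simps)

lemma wscale_zero [simp]: "wscale \<omega> 0 = 0"
  by (simp add: wscale_def vec_eq_iff)

lemma wscale_scaleR [simp]: "wscale \<omega> (c *\<^sub>R v) = c *\<^sub>R wscale \<omega> v"
  by (simp add: wscale_def vec_eq_iff)

lemma inner_wscale:
  assumes "\<forall>i. 0 \<le> \<omega> $ i"
  shows "inner (wscale \<omega> u) (wscale \<omega> v) = inner (\<omega> \<circ>\<^sub>c u) v"
  unfolding inner_vec_def wscale_def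
  by (rule sum.cong) (use assms in \<open>auto simp: algebra_simps real_sqrt_mult[symmetric]\<close>)

lemma norm_wscale_sq:
  assumes "\<forall>i. 0 \<le> \<omega> $ i"
  shows "(norm (wscale \<omega> v))\<^sup>2 = (\<Sum>i\<in>UNIV. \<omega> $ i * (v $ i)\<^sup>2)"
proof -
  have "(norm (wscale \<omega> v))\<^sup>2 = inner (\<omega> \<circ>\<^sub>c v) v"
    by (simp add: power2_norm_eq_inner inner_wscale[OF assms])
  also have "\<dots> = (\<Sum>i\<in>UNIV. \<omega> $ i * (v $ i)\<^sup>2)"
    by (simp add: inner_vec_def power2_eq_square mult.assoc)
  finally show ?thesis .
qed

lemma norm_wscale_sq_ge:
  assumes "\<forall>i. l \<le> \<omega> $ i" and "0 \<le> l"
  shows "l * (norm v)\<^sup>2 \<le> (norm (wscale \<omega> v))\<^sup>2"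
proof -
  have "l * (norm v)\<^sup>2 \<le> (\<Sum>i\<in>UNIV. \<omega> $ i * (v $ i)\<^sup>2)"
    unfolding norm_sq_vec sum_distrib_left using assms(1) by (intro sum_mono mult_right_mono) auto
  also have "\<dots> = (norm (wscale \<omega> v))\<^sup>2"
    using assms by (intro norm_wscale_sq[symmetric]) (meson order_trans)
  finally show ?thesis .
qed

lemma norm_wscale_sq_le:
  assumes "\<forall>i. 0 \<le> \<omega> $ i \<and> \<omega> $ i \<le> h"
  shows "(norm (wscale \<omega> v))\<^sup>2 \<le> h * (norm v)\<^sup>2"
proof -
  have "(norm (wscale \<omega> v))\<^sup>2 = (\<Sum>i\<in>UNIV. \<omega> $ i * (v $ i)\<^sup>2)"
    using assms by (intro norm_wscale_sq) blast
  also have "\<dots> \<le> h * (norm v)\<^sup>2"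
    unfolding norm_sq_vec sum_distrib_left using assms by (intro sum_mono mult_right_mono) auto
  finally show ?thesis .
qed

section \<open>Product sets and their projections\<close>

lemma prodset_convex:
  assumes "\<forall>r<d. convex (Z r)"
  shows "convex (prodset blk d Z)"
  using assms unfolding convex_def prodset_def by auto

lemma continuous_on_blkcomp: "continuous_on S (blkcomp blk r)"
  unfolding blkcomp_def
proof (intro continuous_on_vec_lambda)
  show "continuous_on S (\<lambda>x. if blk i = r then x $ i else 0)" for i
    by (cases "blk i = r") (simp_all add: continuous_on_component)
qed

lemma prodset_closed:
  assumes "\<forall>r<d. closed (Z r)"
  shows "closed (prodset blk d Z)"
proof -
  have "prodset blk d Z = (\<Inter>r\<in>{..<d}. blkcomp blk r -` Z r)"
    unfolding prodset_def by auto
  moreover have "closed (blkcomp blk r -` Z r)" if "r < d" for r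
    using assms that by (intro closed_vimage continuous_on_blkcomp) auto
  ultimately show ?thesis by auto
qed

lemma prodset_bounded:
  assumes "\<forall>r<d. bounded (Z r)" and "\<forall>i. blk i < d"
  shows "bounded (prodset blk d Z)"
proof -
  have "\<forall>r<d. \<exists>R. \<forall>z\<in>Z r. norm z \<le> R" using assms(1) by (simp add: bounded_iff)
  then obtain R where R: "\<And>r z. r < d \<Longrightarrow> z \<in> Z r \<Longrightarrow> norm z \<le> R r" by metis
  have "norm x \<le> (\<Sum>r<d. R r)" if "x \<in> prodset blk d Z" for x
  proof -
    have "norm x \<le> (\<Sum>r<d. norm (blkcomp blk r x))"
      using norm_sum[of "\<lambda>r. blkcomp blk r x" "{..<d}"] by (simp add: sum_blkcomp[OF assms(2)])
    also have "\<dots> \<le> (\<Sum>r<d. R r)"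
      using R that by (intro sum_mono) (auto simp: prodset_def)
    finally show ?thesis .
  qed
  then show ?thesis by (auto simp: bounded_iff)
qed

lemma prodset_nonempty:
  assumes "\<forall>r<d. Z r \<noteq> {}" and "\<forall>r<d. Z r \<subseteq> {z. \<forall>i. blk i \<noteq> r \<longrightarrow> z $ i = 0}"
  shows "prodset blk d Z \<noteq> {}"
proof -
  have "\<forall>r<d. \<exists>y. y \<in> Z r" using assms(1) by blast
  then obtain z where z: "\<And>r. r < d \<Longrightarrow> z r \<in> Z r" by metis
  have "blkcomp blk s (\<Sum>r<d. blkcomp blk r (z r)) = z s" if "s < d" for s
    using z[OF that] assms(2) that by (auto simp: vec_eq_iff sum.delta')
  then have "(\<Sum>r<d. blkcomp blk r (z r)) \<in> prodset blk d Z"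
    using z by (simp add: prodset_def)
  then show ?thesis by blast
qed

lemma prodset_replace_block:
  assumes "p \<in> prodset blk d Z" and "z \<in> prodset blk d Z"
  shows "p + blkcomp blk r (z - p) \<in> prodset blk d Z"
proof -
  have "blkcomp blk s (p + blkcomp blk r (z - p)) = (if s = r then blkcomp blk r z else blkcomp blk s p)"
    for s by (auto simp: vec_eq_iff)
  then show ?thesis using assms by (simp add: prodset_def)
qed

lemma closest_point_prodset_blockwise:
  fixes blk :: "'n::finite \<Rightarrow> nat" and d :: nat and Z :: "nat \<Rightarrow> (real^'n) set"
    and y :: "real^'n"
  defines "p \<equiv> closest_point (prodset blk d Z) y"
  assumes "convex (prodset blk d Z)" and "closed (prodset blk d Z)" and "z \<in> prodset blk d Z"
  shows "inner (blkcomp blk r (y - p)) (z - p) \<le> 0"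
proof -
  have "p \<in> prodset blk d Z" unfolding p_def using assms closest_point_in_set by blast
  then have "p + blkcomp blk r (z - p) \<in> prodset blk d Z"
    using assms(4) by (rule prodset_replace_block)
  then have "inner (y - p) (p + blkcomp blk r (z - p) - p) \<le> 0"
    unfolding p_def by (rule closest_point_dot[OF assms(2,3)])
  then show ?thesis by (simp only: add_diff_cancel_left' inner_blkcomp_commute)
qed

(* Projection onto a product set acts blockwise, so it is also the projection for every
   block-constant weighting of the norm. *)
lemma closest_point_prodset_weighted:
  fixes blk :: "'n::finite \<Rightarrow> nat" and d :: nat and Z :: "nat \<Rightarrow> (real^'n) set"
    and y :: "real^'n"
  defines "p \<equiv> closest_point (prodset blk d Z) y"
  assumes "convex (prodset blk d Z)" and "closed (prodset blk d Z)" and "z \<in> prodset blk d Z"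
    and blk_range: "\<forall>i. blk i < d" and nonneg: "\<forall>i. 0 \<le> blkvec blk d c $ i"
  shows "inner (blkvec blk d c \<circ>\<^sub>c (y - p)) (z - p) \<le> 0"
proof -
  have "blkvec blk d c \<circ>\<^sub>c (y - p) = (\<Sum>r<d. blkcomp blk r (blkvec blk d c \<circ>\<^sub>c (y - p)))"
    by (rule sum_blkcomp[OF blk_range, symmetric])
  also have "\<dots> = (\<Sum>r<d. c r *\<^sub>R blkcomp blk r (y - p))"
    by (simp only: blkcomp_blkvec_cmul[OF blk_range])
  finally have "inner (blkvec blk d c \<circ>\<^sub>c (y - p)) (z - p)
      = (\<Sum>r<d. c r * inner (blkcomp blk r (y - p)) (z - p))"
    by (simp only: inner_sum_left inner_scaleR_left)
  also have "\<dots> \<le> 0"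
  proof (rule sum_nonpos)
    fix r
    show "c r * inner (blkcomp blk r (y - p)) (z - p) \<le> 0"
    proof (cases "\<exists>i. blk i = r")
      case True
      then have "0 \<le> c r" using nonneg blk_range blkvec_nth by metis
      moreover have "inner (blkcomp blk r (y - p)) (z - p) \<le> 0"
        unfolding p_def using assms(2-4) by (rule closest_point_prodset_blockwise)
      ultimately show ?thesis by (rule mult_nonneg_nonpos)
    next
      case False
      then have "blkcomp blk r (y - p) = 0" by (auto simp: vec_eq_iff)
      then show ?thesis by simp
    qed
  qed
  finally show ?thesis .
qed

lemma closest_point_prodset_block_gap:
  fixes blk :: "'n::finite \<Rightarrow> nat" and d :: nat and Z :: "nat \<Rightarrow> (real^'n) set"
    and y G :: "real^'n" and c :: "nat \<Rightarrow> real" and \<eta> :: real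
  defines "p \<equiv> closest_point (prodset blk d Z) (y - \<eta> *\<^sub>R (blkvec blk d c \<circ>\<^sub>c G))"
  assumes "convex (prodset blk d Z)" and "closed (prodset blk d Z)" and z: "z \<in> prodset blk d Z"
    and blk_range: "\<forall>i. blk i < d" and "r < d" and "bounded (Z r)"
  shows "\<eta> * c r * inner (blkcomp blk r G) (p - z) \<le> diameter (Z r) * norm (y - p)"
proof -
  have "inner (blkcomp blk r (y - \<eta> *\<^sub>R (blkvec blk d c \<circ>\<^sub>c G) - p)) (z - p) \<le> 0"
    unfolding p_def using assms(2-4) by (rule closest_point_prodset_blockwise)
  then have "\<eta> * c r * inner (blkcomp blk r G) (p - z) \<le> inner (blkcomp blk r (y - p)) (p - z)"
    by (simp add: blkcomp_blkvec_cmul[OF blk_range] inner_simps algebra_simps)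
  also have "\<dots> = inner (y - p) (blkcomp blk r (p - z))"
    by (rule inner_blkcomp_commute)
  also have "\<dots> \<le> norm (y - p) * norm (blkcomp blk r p - blkcomp blk r z)"
    using norm_cauchy_schwarz by simp
  also have "\<dots> \<le> norm (y - p) * diameter (Z r)"
  proof (rule mult_left_mono)
    have "p \<in> prodset blk d Z" unfolding p_def using assms closest_point_in_set by blast
    then have "blkcomp blk r p \<in> Z r" "blkcomp blk r z \<in> Z r"
      using z \<open>r < d\<close> by (auto simp: prodset_def)
    then show "norm (blkcomp blk r p - blkcomp blk r z) \<le> diameter (Z r)"
      using diameter_bounded_bound[OF \<open>bounded (Z r)\<close>] by (simp add: dist_norm)
  qed simp
  finally show ?thesis by (simp add: mult.commute)
qed

section \<open>Rescaled optimistic gradient descent\<close>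

locale rescaled_ogd =
  fixes blk :: "'n::finite \<Rightarrow> nat" and d :: nat and Z :: "nat \<Rightarrow> (real^'n) set"
    and F :: "real^'n \<Rightarrow> real^'n" and a :: "nat \<Rightarrow> real^'n \<Rightarrow> real"
    and L \<alpha> l h \<eta> :: real and x xh :: "nat \<Rightarrow> real^'n"
  assumes blk_range: "\<forall>i. blk i < d"
    and Z_sub: "\<forall>r<d. Z r \<subseteq> {z. \<forall>i. blk i \<noteq> r \<longrightarrow> z $ i = 0}"
    and Z_ne: "\<forall>r<d. Z r \<noteq> {}"
    and Z_convex: "\<forall>r<d. convex (Z r)"
    and Z_compact: "\<forall>r<d. compact (Z r)"
    and F_lip: "L-lipschitz_on (prodset blk d Z) F"
    and a_lip: "\<forall>r<d. \<alpha>-lipschitz_on (prodset blk d Z) (a r)"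
    and l_pos: "0 < l"
    and A_bounds: "\<forall>y\<in>prodset blk d Z. \<forall>i.
      l \<le> blkvec blk d (\<lambda>r. a r y) $ i \<and> blkvec blk d (\<lambda>r. a r y) $ i \<le> h"
    and eta_pos: "0 < \<eta>"
    and eta_le: "16 * \<eta>\<^sup>2 * (h ^ 3 * L\<^sup>2 + h * (BF blk d (prodset blk d Z) F)\<^sup>2 * \<alpha>\<^sup>2 * real d) \<le> l"
    and init: "x 0 \<in> prodset blk d Z" "xh 1 = x 0"
    and step_x: "\<forall>t\<ge>1. x t = closest_point (prodset blk d Z)
      (xh t - \<eta> *\<^sub>R (blkvec blk d (\<lambda>r. a r (x (t - 1))) \<circ>\<^sub>c F (x (t - 1))))"
    and step_xh: "\<forall>t\<ge>1. xh (t + 1) = closest_point (prodset blk d Z)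
      (xh t - \<eta> *\<^sub>R (blkvec blk d (\<lambda>r. a r (x t)) \<circ>\<^sub>c F (x t)))"
begin

abbreviation X :: "(real^'n) set" where "X \<equiv> prodset blk d Z"

abbreviation A :: "real^'n \<Rightarrow> real^'n" where "A y \<equiv> blkvec blk d (\<lambda>r. a r y)"

abbreviation B :: real where "B \<equiv> BF blk d X F"

abbreviation Dmax :: real where "Dmax \<equiv> MAX r\<in>{..<d}. diameter (Z r)"

lemma X_closed: "closed X"
  using Z_compact by (intro prodset_closed) (simp add: compact_imp_closed)

lemma X_convex: "convex X"
  using Z_convex by (rule prodset_convex)

lemma X_nonempty: "X \<noteq> {}"
  using Z_ne Z_sub by (rule prodset_nonempty)

lemma X_compact: "compact X"
  using Z_compact X_closed prodset_bounded[OF _ blk_range]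
  by (simp add: compact_imp_bounded compact_eq_bounded_closed)

lemma x_in_X: "x t \<in> X"
  using init step_x closest_point_in_set[OF X_closed X_nonempty] by (cases "t = 0") auto

lemma xh_in_X:
  assumes "1 \<le> t"
  shows "xh t \<in> X"
proof (cases "t = 1")
  case True
  then show ?thesis using init x_in_X by simp
next
  case False
  then have "xh t = xh (t - 1 + 1)" "1 \<le> t - 1" using assms by simp_all
  then show ?thesis using step_xh closest_point_in_set[OF X_closed X_nonempty] by metis
qed

lemma A_nth: "A y $ i = a (blk i) y"
  using blk_range by (simp add: blkvec_nth)

lemma l_le_h: "l \<le> h"
  using A_bounds x_in_X[of 0] order_trans by blast

lemma norm_blkcomp_F_le_B:
  assumes "y \<in> X" and "r < d"
  shows "norm (blkcomp blk r (F y)) \<le> B"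
proof -
  obtain M where "\<forall>y\<in>X. norm (F y) \<le> M"
    using compact_imp_bounded[OF compact_continuous_image[OF lipschitz_on_continuous_on[OF F_lip]
          X_compact]]
    by (auto simp: bounded_iff)
  then have "bdd_above ((\<lambda>y. norm (blkcomp blk r (F y))) ` X)"
    by (intro bdd_aboveI2[where M = M]) (meson norm_blkcomp_le order_trans)
  then have "norm (blkcomp blk r (F y)) \<le> (SUP y\<in>X. norm (blkcomp blk r (F y)))"
    using assms(1) by (rule cSUP_upper2) simp
  also have "\<dots> \<le> B"
    unfolding BF_def using assms(2) by (intro Max_ge) auto
  finally show ?thesis .
qed

lemma B_nonneg: "0 \<le> B"
  using norm_blkcomp_F_le_B[OF x_in_X blk_range[rule_format]] norm_ge_zero order_trans by blast

lemma diameter_le_Dmax: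
  assumes "r < d"
  shows "diameter (Z r) \<le> Dmax"
  using assms by (intro Max_ge) auto

lemma Dmax_nonneg: "0 \<le> Dmax"
  using diameter_le_Dmax[OF blk_range[rule_format]] diameter_ge_0 Z_compact blk_range
  by (meson compact_imp_bounded order_trans)

lemma rescaled_operator_lipschitz_sq:
  assumes y: "y \<in> X" and y': "y' \<in> X"
  shows "(norm (A y \<circ>\<^sub>c F y - A y' \<circ>\<^sub>c F y'))\<^sup>2
    \<le> 2 * ((h * L)\<^sup>2 + real d * (\<alpha> * B)\<^sup>2) * (norm (y - y'))\<^sup>2"
proof -
  let ?\<delta> = "norm (y - y')"
  have split: "A y \<circ>\<^sub>c F y - A y' \<circ>\<^sub>c F y'
      = A y \<circ>\<^sub>c (F y - F y') + blkvec blk d (\<lambda>r. a r y - a r y') \<circ>\<^sub>c F y'"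
    by (simp add: vec_eq_iff A_nth blkvec_nth blk_range algebra_simps)
  have "norm (A y \<circ>\<^sub>c (F y - F y')) \<le> h * norm (F y - F y')"
  proof (intro norm_cmul_le allI)
    fix i
    have "l \<le> A y $ i \<and> A y $ i \<le> h" using A_bounds y by blast
    then show "\<bar>A y $ i\<bar> \<le> h" using l_pos by linarith
  qed
  also have "\<dots> \<le> h * (L * ?\<delta>)"
    using lipschitz_onD[OF F_lip y y'] l_le_h l_pos by (simp add: dist_norm mult_left_mono)
  finally have first: "(norm (A y \<circ>\<^sub>c (F y - F y')))\<^sup>2 \<le> (h * L)\<^sup>2 * ?\<delta>\<^sup>2"
    by (metis mult.assoc norm_ge_zero power_mono power_mult_distrib)
  have "(norm (blkvec blk d (\<lambda>r. a r y - a r y') \<circ>\<^sub>c F y'))\<^sup>2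
      = (\<Sum>r<d. (a r y - a r y')\<^sup>2 * (norm (blkcomp blk r (F y')))\<^sup>2)"
    by (rule norm_blkvec_cmul_sq[OF blk_range])
  also have "\<dots> \<le> (\<Sum>r<d. (\<alpha> * ?\<delta>)\<^sup>2 * B\<^sup>2)"
  proof (intro sum_mono mult_mono)
    fix r assume r: "r \<in> {..<d}"
    then have "\<bar>a r y - a r y'\<bar> \<le> \<alpha> * ?\<delta>"
      using lipschitz_onD[OF a_lip[rule_format] y y'] by (simp add: dist_real_def dist_norm)
    then show "(a r y - a r y')\<^sup>2 \<le> (\<alpha> * ?\<delta>)\<^sup>2"
      by (metis abs_ge_zero order_trans power2_abs power_mono)
    show "(norm (blkcomp blk r (F y')))\<^sup>2 \<le> B\<^sup>2"
      using norm_blkcomp_F_le_B[OF y'] r by (simp add: power_mono)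
  qed auto
  finally have second: "(norm (blkvec blk d (\<lambda>r. a r y - a r y') \<circ>\<^sub>c F y'))\<^sup>2
      \<le> real d * (\<alpha> * B)\<^sup>2 * ?\<delta>\<^sup>2"
    by (simp add: power_mult_distrib mult_ac)
  show ?thesis
    using norm_add_sq_le[of "A y \<circ>\<^sub>c (F y - F y')" "blkvec blk d (\<lambda>r. a r y - a r y') \<circ>\<^sub>c F y'"]
      first second unfolding split by (simp add: algebra_simps)
qed

lemma step_size_operator_diff_sq_le:
  assumes "y \<in> X" and "y' \<in> X"
  shows "16 * \<eta>\<^sup>2 * h * (norm (A y \<circ>\<^sub>c F y - A y' \<circ>\<^sub>c F y'))\<^sup>2 \<le> 2 * l * (norm (y - y'))\<^sup>2"
proof -
  have "16 * \<eta>\<^sup>2 * h * (norm (A y \<circ>\<^sub>c F y - A y' \<circ>\<^sub>c F y'))\<^sup>2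
      \<le> 16 * \<eta>\<^sup>2 * h * (2 * ((h * L)\<^sup>2 + real d * (\<alpha> * B)\<^sup>2) * (norm (y - y'))\<^sup>2)"
    using rescaled_operator_lipschitz_sq[OF assms] l_le_h l_pos by (intro mult_left_mono) auto
  also have "\<dots> = 2 * (16 * \<eta>\<^sup>2 * (h ^ 3 * L\<^sup>2 + h * B\<^sup>2 * \<alpha>\<^sup>2 * real d)) * (norm (y - y'))\<^sup>2"
    by (simp add: power_mult_distrib power3_eq_cube power2_eq_square algebra_simps)
  also have "\<dots> \<le> 2 * l * (norm (y - y'))\<^sup>2"
    using eta_le by (simp add: mult_right_mono)
  finally show ?thesis .
qed

lemma operator_change_le_residuals:
  assumes \<omega>_bounds: "\<forall>i. l \<le> blkvec blk d c $ i \<and> blkvec blk d c $ i \<le> h"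
  defines "S \<equiv> wscale (blkvec blk d c)"
  shows "\<eta>\<^sup>2 * (norm (S (A (x t) \<circ>\<^sub>c F (x t) - A (x (t - 1)) \<circ>\<^sub>c F (x (t - 1)))))\<^sup>2
    \<le> ((norm (S (x t - xh t)))\<^sup>2 + (norm (S (x (t - 1) - xh t)))\<^sup>2) / 4"
proof -
  let ?g = "\<lambda>s. A (x s) \<circ>\<^sub>c F (x s)"
  have "\<eta>\<^sup>2 * (norm (S (?g t - ?g (t - 1))))\<^sup>2 \<le> \<eta>\<^sup>2 * (h * (norm (?g t - ?g (t - 1)))\<^sup>2)"
    unfolding S_def using \<omega>_bounds l_pos
    by (intro mult_left_mono norm_wscale_sq_le) (auto intro: order_trans[OF less_imp_le])
  also have "\<dots> \<le> l / 8 * (norm (x t - x (t - 1)))\<^sup>2"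
    using step_size_operator_diff_sq_le[OF x_in_X x_in_X, of t "t - 1"] by (simp add: mult_ac)
  also have "\<dots> \<le> l / 4 * ((norm (x t - xh t))\<^sup>2 + (norm (x (t - 1) - xh t))\<^sup>2)"
    using norm_add_sq_le[of "x t - xh t" "xh t - x (t - 1)"] l_pos
    by (simp add: norm_minus_commute)
  also have "\<dots> \<le> ((norm (S (x t - xh t)))\<^sup>2 + (norm (S (x (t - 1) - xh t)))\<^sup>2) / 4"
    unfolding S_def using \<omega>_bounds l_pos
      norm_wscale_sq_ge[of l "blkvec blk d c" "x t - xh t"]
      norm_wscale_sq_ge[of l "blkvec blk d c" "x (t - 1) - xh t"]
    by (auto simp: distrib_left)
  finally show ?thesis .
qed

lemma optimistic_step:
  assumes t: "1 \<le> t" and z: "z \<in> X"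
    and \<omega>_bounds: "\<forall>i. l \<le> blkvec blk d c $ i \<and> blkvec blk d c $ i \<le> h"
  defines "S \<equiv> wscale (blkvec blk d c)"
  shows "\<eta> * inner (S (A (x t) \<circ>\<^sub>c F (x t))) (S (x t - z))
    \<le> (norm (S (xh t - z)))\<^sup>2 / 2 - (norm (S (xh (t + 1) - z)))\<^sup>2 / 2
      - (norm (S (x t - xh t)))\<^sup>2 / 2 - (norm (S (x t - xh (t + 1))))\<^sup>2 / 2
      + ((norm (S (x t - xh t)))\<^sup>2 + (norm (S (x (t - 1) - xh t)))\<^sup>2) / 4"
proof -
  define g where "g s = A (x s) \<circ>\<^sub>c F (x s)" for s
  have \<omega>_nonneg: "\<forall>i. 0 \<le> blkvec blk d c $ i"
    using \<omega>_bounds l_pos by (meson less_le_trans less_imp_le)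
  have proj: "inner (S (y - closest_point X y)) (S (z' - closest_point X y)) \<le> 0"
    if "z' \<in> X" for y z'
    unfolding S_def inner_wscale[OF \<omega>_nonneg]
    using X_convex X_closed that blk_range \<omega>_nonneg by (rule closest_point_prodset_weighted)
  have x_t: "x t = closest_point X (xh t - \<eta> *\<^sub>R g (t - 1))"
    using step_x t by (simp add: g_def)
  have xh_t: "xh (t + 1) = closest_point X (xh t - \<eta> *\<^sub>R g t)"
    using step_xh t by (simp add: g_def)
  have "\<eta> * inner (S (g t)) (S (x t) - S z)
      \<le> (norm (S (xh t) - S z))\<^sup>2 / 2 - (norm (S (xh (t + 1)) - S z))\<^sup>2 / 2
        - (norm (S (x t) - S (xh t)))\<^sup>2 / 2 - (norm (S (x t) - S (xh (t + 1))))\<^sup>2 / 2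
        + \<eta>\<^sup>2 * (norm (S (g t) - S (g (t - 1))))\<^sup>2"
  proof (rule optimistic_projection_step)
    show "inner (S (xh t) - \<eta> *\<^sub>R S (g (t - 1)) - S (x t)) (S (xh (t + 1)) - S (x t)) \<le> 0"
      using proj[where y = "xh t - \<eta> *\<^sub>R g (t - 1)" and z' = "xh (t + 1)"] xh_in_X x_t by (simp add: S_def)
    show "inner (S (xh t) - \<eta> *\<^sub>R S (g t) - S (xh (t + 1))) (S z - S (xh (t + 1))) \<le> 0"
      using proj[where y = "xh t - \<eta> *\<^sub>R g t" and z' = z] z xh_t by (simp add: S_def)
    show "inner (S (xh t) - \<eta> *\<^sub>R S (g t) - S (xh (t + 1))) (S (x t) - S (xh (t + 1))) \<le> 0"
      using proj[where y = "xh t - \<eta> *\<^sub>R g t" and z' = "x t"] x_in_X xh_t by (simp add: S_def)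
  qed
  moreover have "\<eta>\<^sup>2 * (norm (S (g t) - S (g (t - 1))))\<^sup>2
      \<le> ((norm (S (x t - xh t)))\<^sup>2 + (norm (S (x (t - 1) - xh t)))\<^sup>2) / 4"
    using operator_change_le_residuals[OF \<omega>_bounds] by (simp add: S_def g_def)
  ultimately show ?thesis unfolding S_def g_def wscale_diff by linarith
qed

lemma sum_residuals_le:
  assumes T: "1 \<le> T" and z: "z \<in> X"
    and \<omega>_bounds: "\<forall>i. l \<le> blkvec blk d c $ i \<and> blkvec blk d c $ i \<le> h"
    and minty: "- \<gamma> \<le> (1 / real T) *
      (\<Sum>t=1..T. inner (x t - z) (F (x t) \<circ>\<^sub>c A (x t) \<circ>\<^sub>c blkvec blk d c))"
  shows "l * (\<Sum>t=1..T. (norm (x t - xh t))\<^sup>2 + (norm (x t - xh (t + 1)))\<^sup>2)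
           \<le> 2 * h * (diameter X)\<^sup>2 + 4 * \<eta> * \<gamma> * real T"
proof -
  define S where "S = wscale (blkvec blk d c)"
  have \<omega>_nonneg: "\<forall>i. 0 \<le> blkvec blk d c $ i"
    using \<omega>_bounds l_pos by (meson less_le_trans less_imp_le)
  have weighted_residuals: "(\<Sum>t=1..T. (norm (S (x t - xh t)))\<^sup>2 + (norm (S (x t - xh (t + 1))))\<^sup>2)
      \<le> 2 * (norm (S (xh 1 - z)))\<^sup>2
         - 4 * (\<Sum>t=1..T. \<eta> * inner (S (A (x t) \<circ>\<^sub>c F (x t))) (S (x t - z)))"
    by (rule telescoping_residual_sum)
      (use optimistic_step[OF _ z \<omega>_bounds] init(2) in \<open>simp_all add: S_def\<close>)
  have initial: "(norm (S (xh 1 - z)))\<^sup>2 \<le> h * (diameter X)\<^sup>2"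
  proof -
    have "(norm (S (xh 1 - z)))\<^sup>2 \<le> h * (norm (x 0 - z))\<^sup>2"
      unfolding S_def init(2) using \<omega>_bounds \<omega>_nonneg by (intro norm_wscale_sq_le) auto
    also have "\<dots> \<le> h * (diameter X)\<^sup>2"
      using diameter_bounded_bound[OF compact_imp_bounded[OF X_compact] x_in_X z] l_le_h l_pos
      by (intro mult_left_mono power_mono) (auto simp: dist_norm)
    finally show ?thesis .
  qed
  have minty_sum: "- \<eta> * \<gamma> * real T \<le> (\<Sum>t=1..T. \<eta> * inner (S (A (x t) \<circ>\<^sub>c F (x t))) (S (x t - z)))"
  proof -
    have "- (\<gamma> * real T) \<le> (\<Sum>t=1..T. inner (x t - z) (F (x t) \<circ>\<^sub>c A (x t) \<circ>\<^sub>c blkvec blk d c))"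
      using minty T by (simp add: field_simps)
    then have "\<eta> * - (\<gamma> * real T)
        \<le> \<eta> * (\<Sum>t=1..T. inner (x t - z) (F (x t) \<circ>\<^sub>c A (x t) \<circ>\<^sub>c blkvec blk d c))"
      using eta_pos by (intro mult_left_mono) auto
    moreover have "inner (S (A (x t) \<circ>\<^sub>c F (x t))) (S (x t - z))
        = inner (x t - z) (F (x t) \<circ>\<^sub>c A (x t) \<circ>\<^sub>c blkvec blk d c)" for t
      unfolding S_def inner_wscale[OF \<omega>_nonneg] by (simp add: inner_vec_def mult_ac)
    ultimately show ?thesis by (simp add: sum_distrib_left)
  qed
  have "l * (\<Sum>t=1..T. (norm (x t - xh t))\<^sup>2 + (norm (x t - xh (t + 1)))\<^sup>2)
      \<le> (\<Sum>t=1..T. (norm (S (x t - xh t)))\<^sup>2 + (norm (S (x t - xh (t + 1))))\<^sup>2)"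
    unfolding sum_distrib_left distrib_left S_def
    using \<omega>_bounds l_pos by (intro sum_mono add_mono norm_wscale_sq_ge) auto
  then show ?thesis using weighted_residuals initial minty_sum by linarith
qed

lemma exists_small_residual:
  assumes T: "1 \<le> T" and z: "z \<in> X"
    and \<omega>_bounds: "\<forall>i. l \<le> blkvec blk d c $ i \<and> blkvec blk d c $ i \<le> h"
    and minty: "- \<gamma> \<le> (1 / real T) *
      (\<Sum>t=1..T. inner (x t - z) (F (x t) \<circ>\<^sub>c A (x t) \<circ>\<^sub>c blkvec blk d c))"
  shows "\<exists>t\<in>{1..T}. (norm (x t - xh t))\<^sup>2 + (norm (x t - xh (t + 1)))\<^sup>2
           \<le> 4 * \<eta> * \<gamma> / l + 2 * (diameter X)\<^sup>2 * h / (l * real T)"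
proof (rule exists_le_of_sum_le[OF T])
  have "2 * h * (diameter X)\<^sup>2 + 4 * \<eta> * \<gamma> * real T
      = l * (real T * (4 * \<eta> * \<gamma> / l + 2 * (diameter X)\<^sup>2 * h / (l * real T)))"
    using l_pos T by (simp add: field_simps)
  then show "(\<Sum>t=1..T. (norm (x t - xh t))\<^sup>2 + (norm (x t - xh (t + 1)))\<^sup>2)
      \<le> real T * (4 * \<eta> * \<gamma> / l + 2 * (diameter X)\<^sup>2 * h / (l * real T))"
    using sum_residuals_le[OF T z \<omega>_bounds minty] l_pos by (simp add: mult_le_cancel_left_pos)
qed

lemma block_gap_le:
  assumes t: "1 \<le> t" and z: "z \<in> X" and r: "r < d"
  shows "inner (x t - z) (blkcomp blk r (F (x t)))
    \<le> Dmax * norm (xh t - xh (t + 1)) / (\<eta> * l) + B * norm (x t - xh (t + 1))"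
proof -
  let ?Fr = "blkcomp blk r (F (x t))"
  have "inner (x t - xh (t + 1)) ?Fr \<le> norm (x t - xh (t + 1)) * norm ?Fr"
    by (rule norm_cauchy_schwarz)
  also have "\<dots> \<le> norm (x t - xh (t + 1)) * B"
    using norm_blkcomp_F_le_B[OF x_in_X r] by (rule mult_left_mono) simp
  finally have near: "inner (x t - xh (t + 1)) ?Fr \<le> B * norm (x t - xh (t + 1))"
    by (simp add: mult.commute)
  have far: "inner (xh (t + 1) - z) ?Fr \<le> Dmax * norm (xh t - xh (t + 1)) / (\<eta> * l)"
  proof (cases "inner ?Fr (xh (t + 1) - z) \<le> 0")
    case True
    then show ?thesis
      using Dmax_nonneg eta_pos l_pos by (simp add: inner_commute order_trans[OF _ divide_nonneg_pos])
  next
    case False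
    \<comment> \<open>a nonzero block has a coordinate, where the weight a r (x t) is at least l\<close>
    then obtain i where "blk i = r" by (cases "\<exists>i. blk i = r") (auto simp: inner_vec_def)
    then have "l \<le> a r (x t)" using A_bounds x_in_X A_nth by metis
    have "\<eta> * l * inner ?Fr (xh (t + 1) - z) \<le> \<eta> * a r (x t) * inner ?Fr (xh (t + 1) - z)"
      using \<open>l \<le> a r (x t)\<close> False eta_pos by (intro mult_right_mono mult_left_mono) auto
    also have "\<dots> \<le> diameter (Z r) * norm (xh t - xh (t + 1))"
      using closest_point_prodset_block_gap[OF X_convex X_closed z blk_range r,
          where y = "xh t" and G = "F (x t)" and c = "\<lambda>r. a r (x t)" and \<eta> = \<eta>]
        step_xh t Z_compact r
      by (simp add: compact_imp_bounded)
    also have "\<dots> \<le> Dmax * norm (xh t - xh (t + 1))"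
      using diameter_le_Dmax[OF r] by (rule mult_right_mono) simp
    finally have "\<eta> * l * inner ?Fr (xh (t + 1) - z) \<le> Dmax * norm (xh t - xh (t + 1))" .
    then show ?thesis
      using eta_pos l_pos by (simp add: inner_commute field_simps)
  qed
  have "inner (x t - z) ?Fr = inner (x t - xh (t + 1)) ?Fr + inner (xh (t + 1) - z) ?Fr"
    by (simp add: inner_diff_left)
  then show ?thesis using near far by linarith
qed

lemma block_gap_le_of_residual:
  assumes t: "1 \<le> t" and z: "z \<in> X" and r: "r < d"
    and residual: "(norm (x t - xh t))\<^sup>2 + (norm (x t - xh (t + 1)))\<^sup>2 \<le> M"
  shows "inner (x t - z) (blkcomp blk r (F (x t))) \<le> 2 * (Dmax / (\<eta> * l) + h * B / l) * sqrt M"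
proof -
  define p q where "p = norm (x t - xh t)" and "q = norm (x t - xh (t + 1))"
  have "0 \<le> M" using residual zero_le_power2[of p] zero_le_power2[of q] unfolding p_def q_def
    by linarith
  have "norm (xh t - xh (t + 1)) \<le> p + q"
    unfolding p_def q_def using norm_triangle_ineq4[of "x t - xh (t + 1)" "x t - xh t"]
    by (simp add: norm_minus_commute)
  also have "\<dots> \<le> 2 * sqrt M"
    using residual unfolding p_def q_def by (intro add_le_two_sqrt_of_sq_add_le) auto
  finally have far: "Dmax * norm (xh t - xh (t + 1)) / (\<eta> * l) \<le> Dmax * (2 * sqrt M) / (\<eta> * l)"
    using Dmax_nonneg eta_pos l_pos by (intro divide_right_mono mult_left_mono) auto
  have "B * q \<le> B * sqrt M"
    using residual zero_le_power2[of p] unfolding p_def q_def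
    by (intro mult_left_mono real_le_rsqrt B_nonneg) linarith
  also have "\<dots> \<le> h * B / l * sqrt M"
  proof -
    have "l * (B * sqrt M) \<le> h * (B * sqrt M)"
      using l_le_h B_nonneg \<open>0 \<le> M\<close> by (intro mult_right_mono) auto
    then show ?thesis using l_pos by (simp add: field_simps)
  qed
  finally have near: "B * q \<le> h * B / l * sqrt M" .
  have "0 \<le> h * B / l * sqrt M"
    using l_le_h l_pos B_nonneg \<open>0 \<le> M\<close> by simp
  have "inner (x t - z) (blkcomp blk r (F (x t)))
      \<le> Dmax * (2 * sqrt M) / (\<eta> * l) + h * B / l * sqrt M"
    using block_gap_le[OF t z r] far near unfolding q_def by linarith
  also have "\<dots> \<le> Dmax * (2 * sqrt M) / (\<eta> * l) + 2 * (h * B / l * sqrt M)"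
    using \<open>0 \<le> h * B / l * sqrt M\<close> by argo
  also have "\<dots> = 2 * (Dmax / (\<eta> * l) + h * B / l) * sqrt M"
    by (simp add: field_simps)
  finally show ?thesis .
qed

lemma gap_le_of_residual:
  assumes "1 \<le> t" and "z \<in> X"
    and "(norm (x t - xh t))\<^sup>2 + (norm (x t - xh (t + 1)))\<^sup>2 \<le> M"
  shows "inner (x t - z) (F (x t)) \<le> 2 * real d * (Dmax / (\<eta> * l) + h * B / l) * sqrt M"
proof -
  have "inner (x t - z) (F (x t)) = (\<Sum>r<d. inner (x t - z) (blkcomp blk r (F (x t))))"
    using inner_sum_right[of "x t - z" "\<lambda>r. blkcomp blk r (F (x t))" "{..<d}"]
    by (simp add: sum_blkcomp[OF blk_range])
  also have "\<dots> \<le> (\<Sum>r<d. 2 * (Dmax / (\<eta> * l) + h * B / l) * sqrt M)"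
    using block_gap_le_of_residual[OF assms(1,2) _ assms(3)] by (intro sum_mono) auto
  also have "\<dots> = 2 * real d * (Dmax / (\<eta> * l) + h * B / l) * sqrt M"
    by simp
  finally show ?thesis .
qed

end

theorem corollary3:
  fixes blk :: "'n::finite \<Rightarrow> nat" and d :: nat
    and Z :: "nat \<Rightarrow> (real^'n) set"
    and F :: "real^'n \<Rightarrow> real^'n"
    and a w :: "nat \<Rightarrow> real^'n \<Rightarrow> real"
    and L \<alpha> l h \<gamma> \<eta> :: real and T :: nat
    and x xh :: "nat \<Rightarrow> real^'n"
  defines "X \<equiv> prodset blk d Z"
  defines "A \<equiv> (\<lambda>y. blkvec blk d (\<lambda>r. a r y))"
  defines "W \<equiv> (\<lambda>y. blkvec blk d (\<lambda>r. w r y))"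
  assumes d_pos: "d \<ge> 1"
    and blk_range: "\<forall>i. blk i < d"
    and Z_sub: "\<forall>r<d. Z r \<subseteq> {z. \<forall>i. blk i \<noteq> r \<longrightarrow> z $ i = 0}"
    and Z_ne: "\<forall>r<d. Z r \<noteq> {}"
    and Z_convex: "\<forall>r<d. convex (Z r)"
    and Z_compact: "\<forall>r<d. compact (Z r)"
    and F_lip: "L-lipschitz_on X F"
    and a_lip: "\<forall>r<d. \<alpha>-lipschitz_on X (a r)"
    and l_pos: "0 < l"
    and A_bounds: "\<forall>y\<in>X. \<forall>i. l \<le> A y $ i \<and> A y $ i \<le> h"
    and W_bounds: "\<forall>y\<in>X. \<forall>i. l \<le> W y $ i \<and> W y $ i \<le> h"
    and gamma_pos: "\<gamma> > 0"
    and minty: "\<forall>(T'::nat) (s::nat \<Rightarrow> real^'n). (\<forall>t\<in>{1..T'}. s t \<in> X) \<longrightarrow>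
                  (\<exists>xs\<in>X. (1 / real T') * (\<Sum>t=1..T'. inner (s t - xs) (F (s t) \<circ>\<^sub>c A (s t) \<circ>\<^sub>c W xs)) \<ge> - \<gamma>)"
    and eta_pos: "\<eta> > 0"
    and eta_le: "16 * \<eta>\<^sup>2 * (h ^ 3 * L\<^sup>2 + h * (BF blk d X F)\<^sup>2 * \<alpha>\<^sup>2 * real d) \<le> l"
    and T_pos: "T \<ge> 1"
    and init: "x 0 \<in> X" "xh 1 = x 0"
    and step_x: "\<forall>t\<ge>1. x t = closest_point X (xh t - \<eta> *\<^sub>R (A (x (t - 1)) \<circ>\<^sub>c F (x (t - 1))))"
    and step_xh: "\<forall>t\<ge>1. xh (t + 1) = closest_point X (xh t - \<eta> *\<^sub>R (A (x t) \<circ>\<^sub>c F (x t)))"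
  shows "\<exists>t\<in>{1..T}. \<forall>xs\<in>X.
           inner (x t - xs) (F (x t))
           \<le> 2 * real d * ((MAX r\<in>{..<d}. diameter (Z r)) / (\<eta> * l) + h * BF blk d X F / l)
               * sqrt (4 * \<eta> * \<gamma> / l + 2 * (diameter X)\<^sup>2 * h / (l * real T))"
proof -
  interpret rescaled_ogd blk d Z F a L \<alpha> l h \<eta> x xh
    using assms unfolding X_def A_def by unfold_locales auto
  have "\<forall>t\<in>{1..T}. x t \<in> X" using x_in_X by (simp add: X_def)
  then obtain xs where xs: "xs \<in> X"
    and minty_xs: "- \<gamma> \<le> (1 / real T) * (\<Sum>t=1..T. inner (x t - xs) (F (x t) \<circ>\<^sub>c A (x t) \<circ>\<^sub>c W xs))"
    using minty by blast
  have "\<forall>i. l \<le> W xs $ i \<and> W xs $ i \<le> h" using W_bounds xs by blast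
  then obtain t where t: "t \<in> {1..T}"
    and residual: "(norm (x t - xh t))\<^sup>2 + (norm (x t - xh (t + 1)))\<^sup>2
      \<le> 4 * \<eta> * \<gamma> / l + 2 * (diameter X)\<^sup>2 * h / (l * real T)"
    using exists_small_residual[OF T_pos, of xs "\<lambda>r. w r xs" \<gamma>] xs minty_xs
    unfolding X_def A_def W_def by blast
  show ?thesis
    using gap_le_of_residual[OF _ _ residual] t unfolding X_def by (intro bexI[of _ t] ballI) auto
qed

end
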